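(* Let $p,q\ge0$, $n=p+q\ge1$. For every $M\in\mathcal{G}^{\mathbb{C}}_{p,q}$, $${\rm rank}(M)={\rm rank}(\widehat{M})={\rm rank}(\widetilde{M})={\rm rank}(\overline{M})={\rm rank}(M^\dagger)={\rm rank}(M^\dagger M)={\rm rank}(MM^\dagger).$$
   Context: Let $\mathcal{G}_{p,q}$ be the real Clifford algebra with identity $e$ and generators $e_1,\dots,e_n$ satisfying $e_ae_b+e_be_a=2\eta_{ab}e$, $\eta={\rm diag}(1,\dots,1,-1,\dots,-1)$ ($p$ ones, $q$ minus ones), basis elements $e_A=e_{a_1}\cdots e_{a_k}$ for $a_1<\dots<a_k$ (grade $k$), and $\mathcal{G}^{\mathbb{C}}_{p,q}=\mathbb{C}\otimes\mathcal{G}_{p,q}$ with elements $M=\sum_A m_Ae_A$, $m_A\in\mathbb{C}$. Let $\langle M\rangle_k$ be the projection onto the span of the grade-$k$ basis elements. Define the grade involution $\widehat{M}=\sum_k(-1)^k\langle M\rangle_k$, the reversion $\widetilde{M}=\sum_k(-1)^{k(k-1)/2}\langle M\rangle_k$, complex conjugation $\overline{M}=\sum_A\overline{m_A}e_A$, and Hermitian conjugation $M^\dagger=\sum_A\overline{m_A}(e_A)^{-1}$. Let $N=2^{\lfloor (n+1)/2\rfloor}$ and let $\beta$ be an algebra isomorphism from $\mathcal{G}^{\mathbb{C}}_{p,q}$ onto ${\rm Mat}(N,\mathbb{C})$ if $n$ is even, and onto the algebra of block-diagonal matrices ${\rm diag}(X,Y)$, $X,Y\in{\rm Mat}(N/2,\mathbb{C})$,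 if $n$ is odd. The rank is ${\rm rank}(M):={\rm rank}(\beta(M))$, independent of the choice of $\beta$. *)

theory Defs
  imports Complex_Main "Jordan_Normal_Form.DL_Rank"
begin

text \<open>Elements of the complexified Clifford algebra G^C_{p,q}, n = p + q, are represented by
  their coefficient families: M A = m_A for A a subset of {0..<n} (the basis element e_A is
  e_{a_1}...e_{a_k} with a_1 < ... < a_k the elements of A); coefficients outside are 0.
  Generator e_a (a < n) has square eta_a = 1 if a < p and -1 otherwise.\<close>

type_synonym cl = "nat set \<Rightarrow> complex"

definition cl_elems :: "nat \<Rightarrow> nat \<Rightarrow> cl set" where
  "cl_elems p q = {M. \<forall>A. \<not> A \<subseteq> {..<p+q} \<longrightarrow> M A = 0}"

definition cl_eta :: "nat \<Rightarrow> nat \<Rightarrow> complex" where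
  "cl_eta p a = (if a < p then 1 else -1)"

text \<open>e_A e_B = cl_sign p A B e_{A symmetric-difference B}\<close>
definition cl_sign :: "nat \<Rightarrow> nat set \<Rightarrow> nat set \<Rightarrow> complex" where
  "cl_sign p A B = (-1) ^ card {(a, b). a \<in> A \<and> b \<in> B \<and> b < a} * (\<Prod>a\<in>A \<inter> B. cl_eta p a)"

definition cl_basis :: "nat set \<Rightarrow> cl" where
  "cl_basis A = (\<lambda>C. if C = A then 1 else 0)"

definition cl_one :: cl where
  "cl_one = cl_basis {}"

definition cl_add :: "cl \<Rightarrow> cl \<Rightarrow> cl" where
  "cl_add M N = (\<lambda>A. M A + N A)"

definition cl_scale :: "complex \<Rightarrow> cl \<Rightarrow> cl" where
  "cl_scale c M = (\<lambda>A. c * M A)"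

definition cl_mult :: "nat \<Rightarrow> nat \<Rightarrow> cl \<Rightarrow> cl \<Rightarrow> cl" where
  "cl_mult p q M N = (\<lambda>C. if C \<subseteq> {..<p+q} then
      (\<Sum>A\<in>Pow {..<p+q}. \<Sum>B\<in>Pow {..<p+q}.
         if (A - B) \<union> (B - A) = C then cl_sign p A B * M A * N B else 0)
    else 0)"

definition cl_inv :: "nat \<Rightarrow> nat \<Rightarrow> cl \<Rightarrow> cl" where
  "cl_inv p q X = (THE Y. Y \<in> cl_elems p q \<and> cl_mult p q X Y = cl_one \<and> cl_mult p q Y X = cl_one)"

definition cl_grade :: "nat \<Rightarrow> cl \<Rightarrow> cl" where
  "cl_grade k M = (\<lambda>A. if card A = k then M A else 0)"

definition cl_hat :: "nat \<Rightarrow> nat \<Rightarrow> cl \<Rightarrow> cl" where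
  "cl_hat p q M = (\<lambda>B. \<Sum>k\<le>p+q. cl_scale ((-1) ^ k) (cl_grade k M) B)"

definition cl_rev :: "nat \<Rightarrow> nat \<Rightarrow> cl \<Rightarrow> cl" where
  "cl_rev p q M = (\<lambda>B. \<Sum>k\<le>p+q. cl_scale ((-1) ^ (k * (k - 1) div 2)) (cl_grade k M) B)"

definition cl_conj :: "cl \<Rightarrow> cl" where
  "cl_conj M = (\<lambda>A. cnj (M A))"

definition cl_dagger :: "nat \<Rightarrow> nat \<Rightarrow> cl \<Rightarrow> cl" where
  "cl_dagger p q M = (\<lambda>B. \<Sum>A\<in>Pow {..<p+q}. cl_scale (cnj (M A)) (cl_inv p q (cl_basis A)) B)"

definition cl_target :: "nat \<Rightarrow> complex mat set" where
  "cl_target n = (let N = 2 ^ ((n + 1) div 2) in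
     if even n then carrier_mat N N
     else {four_block_mat X (0\<^sub>m (N div 2) (N div 2)) (0\<^sub>m (N div 2) (N div 2)) Y | X Y.
             X \<in> carrier_mat (N div 2) (N div 2) \<and> Y \<in> carrier_mat (N div 2) (N div 2)})"

definition cl_iso :: "nat \<Rightarrow> nat \<Rightarrow> (cl \<Rightarrow> complex mat) \<Rightarrow> bool" where
  "cl_iso p q \<beta> \<longleftrightarrow>
     bij_betw \<beta> (cl_elems p q) (cl_target (p + q)) \<and>
     (\<forall>M\<in>cl_elems p q. \<forall>N\<in>cl_elems p q. \<beta> (cl_add M N) = \<beta> M + \<beta> N) \<and>
     (\<forall>M\<in>cl_elems p q. \<forall>c. \<beta> (cl_scale c M) = c \<cdot>\<^sub>m \<beta> M) \<and>
     (\<forall>M\<in>cl_elems p q. \<forall>N\<in>cl_elems p q. \<beta> (cl_mult p q M N) = \<beta> M * \<beta> N) \<and>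
     \<beta> cl_one = 1\<^sub>m (2 ^ ((p + q + 1) div 2))"

definition cmat_rank :: "complex mat \<Rightarrow> nat" where
  "cmat_rank A = vec_space.rank (dim_row A) (A :: complex mat)"

end

theory Submission
  imports Defs
begin

text \<open>On the block-diagonal algebra T onto which beta maps, the rank of X equals the largest
  number of pairwise orthogonal nonzero idempotents in the right ideal X T. This description only
  uses the ring structure of T, so rank is preserved by ring automorphisms and anti-automorphisms
  of T, including antilinear ones. Grade involution, reversion, complex conjugation and Hermitian
  conjugation are involutive (anti)automorphisms of the Clifford algebra, and beta transports them
  to T. Finally rank (M\<dagger> M) \<le> rank M\<dagger> = rank M, while M\<dagger> M Z = 0 forces M Z = 0: the scalar
  part of (M Z)\<dagger> (M Z) is the sum of the squared moduli of the coefficients of M Z. So the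
  right annihilator of beta (M\<dagger> M) lies in that of beta M, and M M\<dagger> = (M\<dagger>)\<dagger> M\<dagger> is covered too.\<close>

section \<open>Rank and injectivity\<close>

lemma (in vec_space) rank_mult_right_le:
  assumes X: "X \<in> carrier_mat n m" and W: "W \<in> carrier_mat m k"
  shows "rank (X * W) \<le> rank X"
proof -
  have colsX: "set (cols X) \<subseteq> carrier_vec n" and colsXW: "set (cols (X * W)) \<subseteq> carrier_vec n"
    using X W cols_dim[of X] cols_dim[of "X * W"] by auto
  have "set (cols (X * W)) \<subseteq> span (set (cols X))"
  proof
    fix y assume "y \<in> set (cols (X * W))"
    then obtain i where i: "i < k" "y = col (X * W) i"
      using X W by (metis carrier_matD(2) cols_length cols_nth in_set_conv_nth index_mult_mat(3))
    then have "y = X *\<^sub>v col W i" using col_mult2[OF X W i(1)] by simp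
    then have "y \<in> col_space X" using col_space_eq[OF X] X W i by auto
    then show "y \<in> span (set (cols X))" unfolding col_space_def .
  qed
  then have sub: "span (set (cols (X * W))) \<subseteq> span (set (cols X))"
    using colsX by (simp add: span_is_subset span_is_submodule)
  have "subspace class_ring (span (set (cols (X * W)))) (vs (span (set (cols X))))"
    by (rule nested_subspaces[OF span_is_subspace[OF colsX] span_is_subspace[OF colsXW] sub])
  then show ?thesis
    unfolding rank_def
    using vectorspace.subspace_dim[OF subspace_is_vs[OF span_is_subspace[OF colsX]]]
      fin_dim_span_cols[OF X] fin_dim_span_cols[OF mult_carrier_mat[OF X W]] by auto
qed

lemma (in vec_space) rank_eq_dim_col_if_inj:
  assumes C: "C \<in> carrier_mat n k"
    and inj: "\<And>v. v \<in> carrier_vec k \<Longrightarrow> C *\<^sub>v v = 0\<^sub>v n \<Longrightarrow> v = 0\<^sub>v k"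
  shows "rank C = k"
proof (rule lin_indpt_full_rank[OF C])
  show dist: "distinct (cols C)"
  proof (rule ccontr)
    assume "\<not> distinct (cols C)"
    then obtain i j where ij: "i < k" "j < k" "i \<noteq> j" "col C i = col C j"
      using C by (metis distinct_conv_nth carrier_matD(2) cols_length cols_nth)
    have unit: "C *\<^sub>v unit_vec k l = col C l" if "l < k" for l
      by (rule eq_vecI) (use C that in \<open>auto simp: row_def col_def\<close>)
    let ?v = "unit_vec k i - unit_vec k j :: 'a vec"
    have "C *\<^sub>v ?v = col C i - col C j"
      using C ij by (simp add: mult_minus_distrib_mat_vec[OF C] unit)
    also have "\<dots> = 0\<^sub>v n" using C ij by simp
    finally have "?v = 0\<^sub>v k" using inj[of ?v] by simp
    then have "?v $ i = 0" using ij by simp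
    then show False using ij by simp
  qed
  show "lin_indpt (set (cols C))"
  proof
    assume "lin_dep (set (cols C))"
    then obtain v where "v \<in> carrier_vec k" "v \<noteq> 0\<^sub>v k" "C *\<^sub>v v = 0\<^sub>v n"
      using lin_depE[OF C _ dist] by blast
    then show False using inj by blast
  qed
qed

lemma (in vec_space) rank_ge_if_mult_inj:
  assumes X: "X \<in> carrier_mat n m" and W: "W \<in> carrier_mat m k"
    and inj: "\<And>v. v \<in> carrier_vec k \<Longrightarrow> X * W *\<^sub>v v = 0\<^sub>v n \<Longrightarrow> v = 0\<^sub>v k"
  shows "k \<le> rank X"
  using rank_eq_dim_col_if_inj[OF mult_carrier_mat[OF X W] inj] rank_mult_right_le[OF X W] by simp

lemma nonzero_mat_entry:
  assumes "X \<in> carrier_mat nr nc" and "X \<noteq> 0\<^sub>m nr nc"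
  obtains i j where "i < nr" "j < nc" "X $$ (i, j) \<noteq> 0"
proof -
  have "\<not> (\<forall>i<nr. \<forall>j<nc. X $$ (i, j) = 0)"
    using assms by auto
  then show ?thesis using that by blast
qed

lemma mult_mat_selected_cols:
  assumes F: "F \<in> carrier_mat nr n" and G: "\<And>i. i < k \<Longrightarrow> G i \<in> carrier_mat n n'"
    and m: "\<And>i. i < k \<Longrightarrow> m i < n'"
  shows "F * mat n k (\<lambda>(r, i). G i $$ (r, m i)) = mat nr k (\<lambda>(s, i). (F * G i) $$ (s, m i))"
proof (rule eq_matI)
  fix s i assume "s < dim_row (mat nr k (\<lambda>(s, i). (F * G i) $$ (s, m i)))"
    and "i < dim_col (mat nr k (\<lambda>(s, i). (F * G i) $$ (s, m i)))"
  then have s: "s < nr" and i: "i < k" by auto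
  have "col (mat n k (\<lambda>(r, i). G i $$ (r, m i))) i = col (G i) (m i)"
    using G[OF i] m[OF i] i by auto
  then show "(F * mat n k (\<lambda>(r, i). G i $$ (r, m i))) $$ (s, i)
      = mat nr k (\<lambda>(s, i). (F * G i) $$ (s, m i)) $$ (s, i)"
    using F G[OF i] m[OF i] s i by simp
qed (use F in auto)

section \<open>Orthogonal idempotents in matrix algebras\<close>

locale mat_algebra =
  fixes n :: nat and S :: "'a::field mat set"
  assumes carrier [simp]: "X \<in> S \<Longrightarrow> X \<in> carrier_mat n n"
    and one_mem [simp]: "1\<^sub>m n \<in> S"
    and mult_mem [simp]: "X \<in> S \<Longrightarrow> Y \<in> S \<Longrightarrow> X * Y \<in> S"
    and diff_mem [simp]: "X \<in> S \<Longrightarrow> Y \<in> S \<Longrightarrow> X - Y \<in> S"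
begin

lemma zero_mem [simp]: "0\<^sub>m n n \<in> S"
proof -
  have "1\<^sub>m n - 1\<^sub>m n = (0\<^sub>m n n :: 'a mat)" by (rule minus_r_inv_mat) simp
  then show ?thesis by (metis diff_mem one_mem)
qed

lemma dims [simp]: "X \<in> S \<Longrightarrow> dim_row X = n" "X \<in> S \<Longrightarrow> dim_col X = n"
  by (auto dest: carrier)

lemma mult_assoc [simp]: "X \<in> S \<Longrightarrow> Y \<in> S \<Longrightarrow> Z \<in> S \<Longrightarrow> X * Y * Z = X * (Y * Z)"
  by (rule assoc_mult_mat) auto

lemma one_mult [simp]: "X \<in> S \<Longrightarrow> 1\<^sub>m n * X = X"
  and mult_one [simp]: "X \<in> S \<Longrightarrow> X * 1\<^sub>m n = X"
  and zero_mult [simp]: "X \<in> S \<Longrightarrow> 0\<^sub>m n n * X = 0\<^sub>m n n"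
  and mult_zero [simp]: "X \<in> S \<Longrightarrow> X * 0\<^sub>m n n = 0\<^sub>m n n"
  and diff_zero [simp]: "X \<in> S \<Longrightarrow> X - 0\<^sub>m n n = X"
  and diff_self [simp]: "X \<in> S \<Longrightarrow> X - X = 0\<^sub>m n n"
  by auto

lemma mult_diff_distrib: "X \<in> S \<Longrightarrow> Y \<in> S \<Longrightarrow> Z \<in> S \<Longrightarrow> X * (Y - Z) = X * Y - X * Z"
  by (rule mult_minus_distrib_mat) auto

lemma diff_mult_distrib: "X \<in> S \<Longrightarrow> Y \<in> S \<Longrightarrow> Z \<in> S \<Longrightarrow> (X - Y) * Z = X * Z - Y * Z"
  by (rule minus_mult_distrib_mat) auto

definition right_ideal :: "'a mat \<Rightarrow> 'a mat set" where
  "right_ideal X = (\<lambda>Y. X * Y) ` S"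

definition left_ideal :: "'a mat \<Rightarrow> 'a mat set" where
  "left_ideal X = (\<lambda>Y. Y * X) ` S"

definition orth_idems :: "nat \<Rightarrow> (nat \<Rightarrow> 'a mat) \<Rightarrow> bool" where
  "orth_idems k E \<longleftrightarrow> (\<forall>i<k. E i \<in> S \<and> E i \<noteq> 0\<^sub>m n n \<and>
      (\<forall>j<k. E i * E j = (if i = j then E i else 0\<^sub>m n n)))"

lemma right_ideal_mult [simp]: "Y \<in> S \<Longrightarrow> X * Y \<in> right_ideal X"
  unfolding right_ideal_def by blast

lemma left_ideal_mult [simp]: "Y \<in> S \<Longrightarrow> Y * X \<in> left_ideal X"
  unfolding left_ideal_def by blast

lemma right_idealE:
  assumes "E ` {..<k} \<subseteq> right_ideal X"
  obtains Y where "\<And>i. i < k \<Longrightarrow> Y i \<in> S \<and> E i = X * Y i"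
proof -
  have "\<forall>i<k. \<exists>Y\<in>S. E i = X * Y" using assms unfolding right_ideal_def by blast
  then show ?thesis using that by metis
qed

lemma left_idealE:
  assumes "E ` {..<k} \<subseteq> left_ideal X"
  obtains Y where "\<And>i. i < k \<Longrightarrow> Y i \<in> S \<and> E i = Y i * X"
proof -
  have "\<forall>i<k. \<exists>Y\<in>S. E i = Y * X" using assms unfolding left_ideal_def by blast
  then show ?thesis using that by metis
qed

lemma orth_idemsD:
  assumes "orth_idems k E" and "i < k"
  shows "E i \<in> S" "E i \<noteq> 0\<^sub>m n n" "E i * E i = E i"
    and "\<And>j. j < k \<Longrightarrow> j \<noteq> i \<Longrightarrow> E i * E j = 0\<^sub>m n n"
  using assms unfolding orth_idems_def by auto

lemma orth_idems_cols_inj: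
  assumes E: "orth_idems k E"
    and rm: "\<And>i. i < k \<Longrightarrow> r i < n \<and> m i < n \<and> E i $$ (r i, m i) \<noteq> 0"
    and v: "v \<in> carrier_vec k" and ker: "mat n k (\<lambda>(s, i). E i $$ (s, m i)) *\<^sub>v v = 0\<^sub>v n"
  shows "v = 0\<^sub>v k"
proof (rule eq_vecI)
  let ?C = "mat n k (\<lambda>(s, i). E i $$ (s, m i))"
  fix j assume "j < dim_vec (0\<^sub>v k)"
  then have j: "j < k" by simp
  note ED = orth_idemsD[OF E]
  txt \<open>Multiplying by E j kills every column of ?C except the j-th.\<close>
  have "E j * ?C = mat n k (\<lambda>(s, i). (E j * E i) $$ (s, m i))"
    using ED(1) rm j by (intro mult_mat_selected_cols) auto
  also have "\<dots> = mat n k (\<lambda>(s, i). if i = j then E j $$ (s, m j) else 0)"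
  proof (intro eq_matI)
    fix s i assume "s < dim_row (mat n k (\<lambda>(s, i). if i = j then E j $$ (s, m j) else 0))"
      and "i < dim_col (mat n k (\<lambda>(s, i). if i = j then E j $$ (s, m j) else 0))"
    then have s: "s < n" and i: "i < k" by auto
    show "mat n k (\<lambda>(s, i). (E j * E i) $$ (s, m i)) $$ (s, i)
        = mat n k (\<lambda>(s, i). if i = j then E j $$ (s, m j) else 0) $$ (s, i)"
      using ED(3)[OF j] ED(4)[OF j i] rm[OF i] s i by (cases "i = j") auto
  qed simp_all
  finally have EC: "E j * ?C = mat n k (\<lambda>(s, i). if i = j then E j $$ (s, m j) else 0)" .
  have "(E j * ?C) *\<^sub>v v = E j *\<^sub>v (?C *\<^sub>v v)"
    using v ED(1)[OF j] by (intro assoc_mult_mat_vec) auto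
  also have "\<dots> = 0\<^sub>v n" using ker ED(1)[OF j] by auto
  finally have "((E j * ?C) *\<^sub>v v) $ r j = 0" using rm[OF j] by simp
  moreover have "((E j * ?C) *\<^sub>v v) $ r j = E j $$ (r j, m j) * v $ j"
  proof -
    have "\<And>i. (if i = j then E j $$ (r j, m j) else 0) * v $ i
        = (if i = j then E j $$ (r j, m j) * v $ j else 0)" by simp
    then show ?thesis unfolding EC using rm[OF j] v j by (simp add: scalar_prod_def)
  qed
  ultimately show "v $ j = 0\<^sub>v k $ j" using rm[OF j] j by simp
qed (use v in simp)

lemma orth_idems_mult_inj:
  assumes X: "X \<in> S" and E: "orth_idems k E" and ideal: "E ` {..<k} \<subseteq> right_ideal X"
  obtains W where "W \<in> carrier_mat n k"
    and "\<And>v. v \<in> carrier_vec k \<Longrightarrow> X * W *\<^sub>v v = 0\<^sub>v n \<Longrightarrow> v = 0\<^sub>v k"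
proof -
  obtain Y where Y: "\<And>i. i < k \<Longrightarrow> Y i \<in> S \<and> E i = X * Y i"
    using right_idealE[OF ideal] by blast
  have "\<forall>i<k. \<exists>r m. r < n \<and> m < n \<and> E i $$ (r, m) \<noteq> 0"
    using nonzero_mat_entry[OF carrier orth_idemsD(2)[OF E]] orth_idemsD(1)[OF E] by metis
  then obtain r m where rm: "\<And>i. i < k \<Longrightarrow> r i < n \<and> m i < n \<and> E i $$ (r i, m i) \<noteq> 0"
    by metis
  define W where "W = mat n k (\<lambda>(s, i). Y i $$ (s, m i))"
  have "X * W = mat n k (\<lambda>(s, i). (X * Y i) $$ (s, m i))"
    unfolding W_def using X Y rm by (intro mult_mat_selected_cols) auto
  also have "\<dots> = mat n k (\<lambda>(s, i). E i $$ (s, m i))"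
    using Y by (intro eq_matI) simp_all
  finally show ?thesis
    using that[of W] orth_idems_cols_inj[OF E rm] unfolding W_def by simp
qed

lemma orth_idems_le_rank:
  assumes X: "X \<in> S" and "orth_idems k E" and "E ` {..<k} \<subseteq> right_ideal X"
  shows "k \<le> vec_space.rank n X"
  using orth_idems_mult_inj[OF assms] vec_space.rank_ge_if_mult_inj[OF carrier[OF X]] by metis

lemma orth_idems_left_to_right:
  assumes X: "X \<in> S" and E: "orth_idems k E" and ideal: "E ` {..<k} \<subseteq> left_ideal X"
  obtains F where "orth_idems k F" and "F ` {..<k} \<subseteq> right_ideal X"
proof -
  obtain Y where Y: "\<And>i. i < k \<Longrightarrow> Y i \<in> S \<and> E i = Y i * X"
    using left_idealE[OF ideal] by blast
  have Y_S: "Y i \<in> S" if "i < k" for i using Y[OF that] by simp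
  note ED = orth_idemsD[OF E]
  define F where "F i = X * (E i * Y i)" for i
  have YX: "Y i * (X * Z) = E i * Z" if "i < k" "Z \<in> S" for i Z
    using Y[OF that(1)] X that(2) mult_assoc[of "Y i" X Z] by simp
  have FF: "F i * F j = X * (E i * E j * Y j)" if i: "i < k" and j: "j < k" for i j
  proof -
    have "F i * F j = X * (E i * (Y i * (X * (E j * Y j))))"
      unfolding F_def using X ED(1) Y_S i j by simp
    also have "\<dots> = X * (E i * (E i * (E j * Y j)))"
      using YX[OF i, of "E j * Y j"] ED(1)[OF j] Y_S[OF j] by simp
    finally show ?thesis using ED(1,3)[OF i] ED(1)[OF j] Y_S[OF j] by (simp flip: mult_assoc)
  qed
  have "orth_idems k F"
    unfolding orth_idems_def
  proof (intro allI impI conjI)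
    fix i assume i: "i < k"
    show "F i \<in> S" unfolding F_def using X ED(1)[OF i] Y_S[OF i] by simp
    have "Y i * F i * X = Y i * (X * (E i * (Y i * X)))"
      unfolding F_def using X ED(1)[OF i] Y_S[OF i] by simp
    also have "\<dots> = E i * E i * E i"
      using YX[OF i, of "E i * (Y i * X)"] Y[OF i] X ED(1)[OF i] by simp
    finally have "Y i * F i * X = E i" using ED(1,3)[OF i] by simp
    then show "F i \<noteq> 0\<^sub>m n n" using ED(2)[OF i] X Y_S[OF i] by auto
    fix j assume j: "j < k"
    show "F i * F j = (if i = j then F i else 0\<^sub>m n n)"
      using FF[OF i j] ED(3)[OF i] ED(4)[OF i j] X Y_S[OF j] unfolding F_def by auto
  qed
  moreover have "F ` {..<k} \<subseteq> right_ideal X"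
    unfolding F_def using ED(1) Y_S by auto
  ultimately show ?thesis using that by blast
qed

lemma orth_idems_image:
  assumes closed: "\<And>X. X \<in> S \<Longrightarrow> \<psi> X \<in> S"
    and zero: "\<psi> (0\<^sub>m n n) = 0\<^sub>m n n"
    and zero_iff: "\<And>X. X \<in> S \<Longrightarrow> \<psi> X = 0\<^sub>m n n \<Longrightarrow> X = 0\<^sub>m n n"
    and mult: "(\<forall>X\<in>S. \<forall>Y\<in>S. \<psi> (X * Y) = \<psi> X * \<psi> Y) \<or> (\<forall>X\<in>S. \<forall>Y\<in>S. \<psi> (X * Y) = \<psi> Y * \<psi> X)"
    and E: "orth_idems k E"
  shows "orth_idems k (\<lambda>i. \<psi> (E i))"
  unfolding orth_idems_def
proof (intro allI impI conjI)
  fix i assume i: "i < k"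
  note ED = orth_idemsD[OF E]
  show "\<psi> (E i) \<in> S" using closed ED(1)[OF i] .
  show "\<psi> (E i) \<noteq> 0\<^sub>m n n" using zero_iff ED(1,2)[OF i] by blast
  fix j assume j: "j < k"
  have "\<psi> (E i) * \<psi> (E j) = \<psi> (E i * E j) \<or> \<psi> (E i) * \<psi> (E j) = \<psi> (E j * E i)"
    using mult ED(1)[OF i] ED(1)[OF j] by metis
  then show "\<psi> (E i) * \<psi> (E j) = (if i = j then \<psi> (E i) else 0\<^sub>m n n)"
    using ED(3)[OF i] ED(4)[OF i j] ED(4)[OF j i] zero by (cases "i = j") auto
qed

lemma orth_idems_Suc_complement:
  assumes E: "E \<in> S" "E * E = E" "E \<noteq> 0\<^sub>m n n"
    and J: "J \<in> S" "E * J = 0\<^sub>m n n" "J * E = 0\<^sub>m n n"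
    and F: "orth_idems k F" and JF: "\<And>i. i < k \<Longrightarrow> J * F i = F i"
  shows "orth_idems (Suc k) (case_nat E (\<lambda>i. F i * J))"
  unfolding orth_idems_def
proof (intro allI impI conjI)
  let ?G = "case_nat E (\<lambda>i. F i * J)"
  note FD = orth_idemsD[OF F]
  fix i j assume i: "i < Suc k" and j: "j < Suc k"
  show "?G i \<in> S" using i E J FD(1) by (cases i) auto
  show "?G i \<noteq> 0\<^sub>m n n"
  proof (cases i)
    case (Suc i')
    then have i': "i' < k" using i by simp
    have "?G i * F i' = F i'" unfolding Suc using JF[OF i'] FD(1,3)[OF i'] J by simp
    then show ?thesis using FD(1,2)[OF i'] by auto
  qed (use E in simp)
  show "?G i * ?G j = (if i = j then ?G i else 0\<^sub>m n n)"
  proof (cases i; cases j)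
    fix i' j' assume ij: "i = Suc i'" "j = Suc j'"
    then have i': "i' < k" and j': "j' < k" using i j by auto
    have "F i' * J * (F j' * J) = F i' * (J * F j') * J"
      using FD(1)[OF i'] FD(1)[OF j'] J by simp
    then show ?thesis
      unfolding ij using JF[OF j'] FD(3)[OF i'] FD(4)[OF i' j'] FD(1)[OF i'] J by auto
  next
    fix j' assume ij: "i = 0" "j = Suc j'"
    then have j': "j' < k" using j by simp
    have "E * F j' = E * J * F j'" using mult_assoc[OF E(1) J(1) FD(1)[OF j']] JF[OF j'] by simp
    also have "\<dots> = 0\<^sub>m n n" using J(2) FD(1)[OF j'] by simp
    finally have "E * F j' = 0\<^sub>m n n" .
    then show ?thesis unfolding ij using E J FD(1)[OF j'] mult_assoc[of E "F j'" J] by simp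
  next
    fix i' assume ij: "i = Suc i'" "j = 0"
    then have i': "i' < k" using i by simp
    show ?thesis unfolding ij using J FD(1)[OF i'] E by simp
  qed (simp add: E)
qed

text \<open>Idempotents F i of the right ideal of (1 - E) X are annihilated by E on the left;
  correcting them to F i (1 - E) makes them orthogonal to E on both sides.\<close>
lemma orth_idems_Suc:
  assumes X: "X \<in> S" and E: "E \<in> S" "E * E = E" "E \<noteq> 0\<^sub>m n n"
    and F: "orth_idems k F" and ideal: "F ` {..<k} \<subseteq> right_ideal ((1\<^sub>m n - E) * X)"
  shows "orth_idems (Suc k) (case_nat E (\<lambda>i. F i * (1\<^sub>m n - E)))"
proof (rule orth_idems_Suc_complement[OF E _ _ _ F])
  define J where "J = 1\<^sub>m n - E"
  have J_S: "J \<in> S" unfolding J_def using E by simp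
  have JJ: "J * J = J" unfolding J_def using E by (simp add: mult_diff_distrib diff_mult_distrib)
  obtain Z where Z: "\<And>i. i < k \<Longrightarrow> Z i \<in> S \<and> F i = J * X * Z i"
    using right_idealE[OF ideal] unfolding J_def by blast
  show "J * F i = F i" if "i < k" for i
    using Z[OF that] J_S X JJ mult_assoc[of J J "X * Z i"] by simp
qed (use E in \<open>simp_all add: mult_diff_distrib diff_mult_distrib\<close>)

lemma right_ideal_complement_mult:
  assumes X: "X \<in> S" and Y: "Y \<in> S" and Z: "Z \<in> right_ideal ((1\<^sub>m n - X * Y) * X)" and W: "W \<in> S"
  shows "Z * W \<in> right_ideal X"
proof -
  obtain V where V: "V \<in> S" "Z = (1\<^sub>m n - X * Y) * X * V" using Z unfolding right_ideal_def by blast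
  have "(1\<^sub>m n - X * Y) * X = X - X * (Y * X)" using X Y by (simp add: diff_mult_distrib)
  then have "Z * W = X * ((V - Y * (X * V)) * W)"
    using V X Y W by (simp add: diff_mult_distrib mult_diff_distrib)
  then show ?thesis using V X Y W by simp
qed

end

section \<open>Block-diagonal matrices\<close>

text \<open>Two diagonal blocks, split at index c; for c = N this is the full matrix algebra.\<close>
definition block_diag_mats :: "nat \<Rightarrow> nat \<Rightarrow> 'a::zero mat set" where
  "block_diag_mats N c = {X \<in> carrier_mat N N. \<forall>i<N. \<forall>j<N. (c \<le> i) \<noteq> (c \<le> j) \<longrightarrow> X $$ (i, j) = 0}"

lemma block_diag_matsI:
  "X \<in> carrier_mat N N \<Longrightarrow> (\<And>i j. i < N \<Longrightarrow> j < N \<Longrightarrow> (c \<le> i) \<noteq> (c \<le> j) \<Longrightarrow> X $$ (i, j) = 0)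
    \<Longrightarrow> X \<in> block_diag_mats N c"
  unfolding block_diag_mats_def by auto

lemma block_diag_mats_off:
  "X \<in> block_diag_mats N c \<Longrightarrow> i < N \<Longrightarrow> j < N \<Longrightarrow> (c \<le> i) \<noteq> (c \<le> j) \<Longrightarrow> X $$ (i, j) = 0"
  unfolding block_diag_mats_def by auto

lemma mat_algebra_block_diag: "mat_algebra N (block_diag_mats N c :: 'a::field mat set)"
proof
  fix X Y :: "'a mat" assume X: "X \<in> block_diag_mats N c" and Y: "Y \<in> block_diag_mats N c"
  then have XY: "X \<in> carrier_mat N N" "Y \<in> carrier_mat N N" unfolding block_diag_mats_def by auto
  show "X - Y \<in> block_diag_mats N c"
    using XY by (intro block_diag_matsI) (auto simp: block_diag_mats_off[OF X] block_diag_mats_off[OF Y])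
  show "X * Y \<in> block_diag_mats N c"
  proof (rule block_diag_matsI)
    fix i j assume ij: "i < N" "j < N" "(c \<le> i) \<noteq> (c \<le> j)"
    have "X $$ (i, l) * Y $$ (l, j) = 0" if "l < N" for l
      using block_diag_mats_off[OF X ij(1) that] block_diag_mats_off[OF Y that ij(2)] ij(3) by fastforce
    then show "(X * Y) $$ (i, j) = 0" using XY ij by (simp add: scalar_prod_def sum.neutral)
  qed (use XY in simp)
qed (auto simp: block_diag_mats_def)

interpretation block_diag: mat_algebra N "block_diag_mats N c :: 'a::field mat set" for N c
  by (rule mat_algebra_block_diag)

lemma block_diag_rank_one_idem:
  fixes X :: "'a::field mat"
  assumes X: "X \<in> block_diag_mats N c" and nz: "X \<noteq> 0\<^sub>m N N"
  obtains Y where "Y \<in> block_diag_mats N c" "X * Y * (X * Y) = X * Y" "X * Y \<noteq> 0\<^sub>m N N"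
    "vec_space.rank N (X * Y * X) \<le> 1"
proof -
  have X_carrier: "X \<in> carrier_mat N N" using X by simp
  obtain a b where ab: "a < N" "b < N" "X $$ (a, b) \<noteq> 0"
    using nonzero_mat_entry[OF X_carrier nz] by blast
  define x where "x = X $$ (a, b)"
  have same_block: "(c \<le> a) = (c \<le> b)" using block_diag_mats_off[OF X ab(1,2)] ab(3) by blast
  define Y where "Y = mat N N (\<lambda>(i, j). if i = b \<and> j = a then inverse x else 0)"
  have Y: "Y \<in> block_diag_mats N c"
    unfolding Y_def using same_block by (intro block_diag_matsI) auto
  define E where "E = X * Y"
  have E: "E = mat N N (\<lambda>(i, j). if j = a then X $$ (i, b) / x else 0)"
    unfolding E_def Y_def using X_carrier ab(2)
    by (intro eq_matI) (auto simp: scalar_prod_def divide_inverse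
        if_distrib[of "\<lambda>y. X $$ _ * y"] cong: if_cong)
  have EM: "E * M = mat N N (\<lambda>(i, j). X $$ (i, b) / x * M $$ (a, j))" if M: "M \<in> carrier_mat N N" for M
    unfolding E using M ab(1)
    by (intro eq_matI) (auto simp: scalar_prod_def if_distrib[of "\<lambda>y. y * M $$ _"] cong: if_cong)
  have "E * E = E"
    unfolding EM[OF mult_carrier_mat[OF X_carrier block_diag.carrier[OF Y]], folded E_def]
    unfolding E using ab x_def by (intro eq_matI) auto
  moreover have "E \<noteq> 0\<^sub>m N N"
  proof
    assume "E = 0\<^sub>m N N"
    then have "E $$ (a, a) = 0" using ab by simp
    then show False unfolding E using ab x_def by simp
  qed
  moreover have "vec_space.rank N (E * X) \<le> 1"
    by (rule vec_space.rank_le_1_product_entries[where f="\<lambda>i. X $$ (i, b) / x"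
          and g="\<lambda>j. X $$ (a, j)" and nc=N])
      (use X_carrier in \<open>auto simp: EM\<close>)
  ultimately show ?thesis using that Y unfolding E_def by blast
qed

lemma block_diag_orth_idems_exist:
  fixes X :: "'a::field mat"
  assumes "X \<in> block_diag_mats N c"
  obtains E where "block_diag.orth_idems N c (vec_space.rank N X) E"
    and "E ` {..<vec_space.rank N X} \<subseteq> block_diag.right_ideal N c X"
proof -
  have "\<exists>E. block_diag.orth_idems N c k E \<and> E ` {..<k} \<subseteq> block_diag.right_ideal N c X"
    if "X \<in> block_diag_mats N c" "k \<le> vec_space.rank N X" for k
    using that
  proof (induction k arbitrary: X)
    case 0
    then show ?case by (auto simp: block_diag.orth_idems_def)
  next
    case (Suc k)
    note X = Suc.prems(1)
    have "X \<noteq> 0\<^sub>m N N"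
    proof
      assume "X = 0\<^sub>m N N"
      then have "vec_space.rank N X = 0" by (simp add: vec_space.rank_0I)
      then show False using Suc.prems(2) by simp
    qed
    then obtain Y where Y: "Y \<in> block_diag_mats N c" "X * Y * (X * Y) = X * Y" "X * Y \<noteq> 0\<^sub>m N N"
      "vec_space.rank N (X * Y * X) \<le> 1"
      using block_diag_rank_one_idem[OF X] by blast
    define X' where "X' = (1\<^sub>m N - X * Y) * X"
    have X': "X' \<in> block_diag_mats N c" unfolding X'_def using X Y by simp
    have "X' = X - X * Y * X"
      unfolding X'_def using X Y block_diag.diff_mult_distrib[of "1\<^sub>m N" N c "X * Y" X] by simp
    then have decomp: "X * Y * X + X' = X" using X Y by (intro eq_matI) auto
    have XYX: "X * Y * X \<in> block_diag_mats N c" using X Y by simp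
    have "vec_space.rank N (X * Y * X + X') \<le> vec_space.rank N (X * Y * X) + vec_space.rank N X'"
      using block_diag.carrier[OF XYX] block_diag.carrier[OF X'] by (rule vec_space.rank_subadditive)
    then have "vec_space.rank N X \<le> vec_space.rank N (X * Y * X) + vec_space.rank N X'"
      unfolding decomp .
    then have "k \<le> vec_space.rank N X'" using Suc.prems(2) Y(4) by simp
    then obtain F where F: "block_diag.orth_idems N c k F"
      and F_ideal: "F ` {..<k} \<subseteq> block_diag.right_ideal N c ((1\<^sub>m N - X * Y) * X)"
      using Suc.IH[OF X'] unfolding X'_def by blast
    have XY: "X * Y \<in> block_diag_mats N c" using X Y(1) by simp
    let ?G = "case_nat (X * Y) (\<lambda>i. F i * (1\<^sub>m N - X * Y))"
    have "block_diag.orth_idems N c (Suc k) ?G"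
      using block_diag.orth_idems_Suc[OF X XY Y(2,3) F F_ideal] .
    moreover have "?G ` {..<Suc k} \<subseteq> block_diag.right_ideal N c X"
    proof (rule image_subsetI)
      fix i assume "i \<in> {..<Suc k}"
      then show "?G i \<in> block_diag.right_ideal N c X"
        using block_diag.right_ideal_complement_mult[OF X Y(1) _ block_diag.diff_mem[OF _ XY]]
          F_ideal Y(1) by (cases i) auto
    qed
    ultimately show ?case by blast
  qed
  then show ?thesis using assms that by blast
qed

lemma block_diag_rank_le_image:
  fixes \<psi> :: "'a::field mat \<Rightarrow> 'a mat"
  assumes closed: "\<And>X. X \<in> block_diag_mats N c \<Longrightarrow> \<psi> X \<in> block_diag_mats N c"
    and zero: "\<psi> (0\<^sub>m N N) = 0\<^sub>m N N"
    and zero_iff: "\<And>X. X \<in> block_diag_mats N c \<Longrightarrow> \<psi> X = 0\<^sub>m N N \<Longrightarrow> X = 0\<^sub>m N N"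
    and mult: "(\<forall>X\<in>block_diag_mats N c. \<forall>Y\<in>block_diag_mats N c. \<psi> (X * Y) = \<psi> X * \<psi> Y) \<or>
      (\<forall>X\<in>block_diag_mats N c. \<forall>Y\<in>block_diag_mats N c. \<psi> (X * Y) = \<psi> Y * \<psi> X)"
    and X: "X \<in> block_diag_mats N c"
  shows "vec_space.rank N X \<le> vec_space.rank N (\<psi> X)"
proof -
  let ?k = "vec_space.rank N X"
  obtain E where E: "block_diag.orth_idems N c ?k E" and ideal: "E ` {..<?k} \<subseteq> block_diag.right_ideal N c X"
    using block_diag_orth_idems_exist[OF X] .
  obtain Y where Y: "\<And>i. i < ?k \<Longrightarrow> Y i \<in> block_diag_mats N c \<and> E i = X * Y i"
    using block_diag.right_idealE[OF ideal] by blast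
  have \<psi>E: "block_diag.orth_idems N c ?k (\<lambda>i. \<psi> (E i))"
    using block_diag.orth_idems_image[OF closed zero zero_iff mult E] .
  from mult show ?thesis
  proof
    assume "\<forall>X\<in>block_diag_mats N c. \<forall>Y\<in>block_diag_mats N c. \<psi> (X * Y) = \<psi> X * \<psi> Y"
    then have "(\<lambda>i. \<psi> (E i)) ` {..<?k} \<subseteq> block_diag.right_ideal N c (\<psi> X)"
      using X Y closed by auto
    then show ?thesis using block_diag.orth_idems_le_rank[OF closed[OF X] \<psi>E] by blast
  next
    assume "\<forall>X\<in>block_diag_mats N c. \<forall>Y\<in>block_diag_mats N c. \<psi> (X * Y) = \<psi> Y * \<psi> X"
    then have "(\<lambda>i. \<psi> (E i)) ` {..<?k} \<subseteq> block_diag.left_ideal N c (\<psi> X)"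
      using X Y closed by auto
    then obtain F where "block_diag.orth_idems N c ?k F"
      and "F ` {..<?k} \<subseteq> block_diag.right_ideal N c (\<psi> X)"
      using block_diag.orth_idems_left_to_right[OF closed[OF X] \<psi>E] by blast
    then show ?thesis using block_diag.orth_idems_le_rank[OF closed[OF X]] by blast
  qed
qed

text \<open>Puts the upper block of u into column 0 and the lower block into column c, so that
  kernel vectors can be tested by matrices of the algebra.\<close>
definition block_diag_of_vec :: "nat \<Rightarrow> nat \<Rightarrow> 'a::zero vec \<Rightarrow> 'a mat" where
  "block_diag_of_vec N c u = mat N N (\<lambda>(i, j). if j = (if c \<le> i then c else 0) then u $ i else 0)"

lemma block_diag_of_vec_mem: "block_diag_of_vec N c u \<in> block_diag_mats N c"
  unfolding block_diag_of_vec_def by (intro block_diag_matsI) auto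

lemma block_diag_of_vec_eq_zero_iff:
  assumes u: "u \<in> carrier_vec N"
  shows "block_diag_of_vec N c u = 0\<^sub>m N N \<longleftrightarrow> u = 0\<^sub>v N"
proof
  assume zero: "block_diag_of_vec N c u = 0\<^sub>m N N"
  show "u = 0\<^sub>v N"
  proof (rule eq_vecI)
    fix i assume "i < dim_vec (0\<^sub>v N)"
    then have i: "i < N" and "(if c \<le> i then c else 0) < N" by auto
    then show "u $ i = 0\<^sub>v N $ i"
      using arg_cong[OF zero, of "\<lambda>Z. Z $$ (i, if c \<le> i then c else 0)"]
      by (simp add: block_diag_of_vec_def)
  qed (use u in simp)
qed (auto simp: block_diag_of_vec_def)

lemma mult_block_diag_of_vec:
  fixes A :: "'a::comm_ring_1 mat"
  assumes A: "A \<in> block_diag_mats N c" and u: "u \<in> carrier_vec N"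
  shows "A * block_diag_of_vec N c u = block_diag_of_vec N c (A *\<^sub>v u)"
proof (rule eq_matI)
  fix i j assume "i < dim_row (block_diag_of_vec N c (A *\<^sub>v u))"
    and "j < dim_col (block_diag_of_vec N c (A *\<^sub>v u))"
  then have i: "i < N" and j: "j < N" by (auto simp: block_diag_of_vec_def)
  let ?\<rho> = "\<lambda>l. if c \<le> l then c else (0::nat)"
  have A_carrier: "A \<in> carrier_mat N N" using A by (simp add: block_diag_mats_def)
  have same: "A $$ (i, l) * (if j = ?\<rho> l then u $ l else 0) = (if j = ?\<rho> i then A $$ (i, l) * u $ l else 0)"
    if "l < N" for l
    using block_diag_mats_off[OF A i that] by (cases "(c \<le> i) = (c \<le> l)") auto
  have "(A * block_diag_of_vec N c u) $$ (i, j) = (\<Sum>l<N. if j = ?\<rho> i then A $$ (i, l) * u $ l else 0)"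
    using A_carrier i j same by (simp add: block_diag_of_vec_def scalar_prod_def lessThan_atLeast0)
  also have "\<dots> = block_diag_of_vec N c (A *\<^sub>v u) $$ (i, j)"
    using A_carrier u i j by (simp add: block_diag_of_vec_def scalar_prod_def lessThan_atLeast0)
  finally show "(A * block_diag_of_vec N c u) $$ (i, j) = block_diag_of_vec N c (A *\<^sub>v u) $$ (i, j)" .
qed (use A in \<open>auto simp: block_diag_of_vec_def block_diag_mats_def\<close>)

lemma block_diag_rank_le_of_annihilator:
  fixes A B :: "'a::field mat"
  assumes A: "A \<in> block_diag_mats N c" and B: "B \<in> block_diag_mats N c"
    and ann: "\<And>Z. Z \<in> block_diag_mats N c \<Longrightarrow> A * Z = 0\<^sub>m N N \<Longrightarrow> B * Z = 0\<^sub>m N N"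
  shows "vec_space.rank N B \<le> vec_space.rank N A"
proof -
  let ?k = "vec_space.rank N B"
  have A_carrier: "A \<in> carrier_mat N N" and B_carrier: "B \<in> carrier_mat N N"
    using block_diag.carrier[OF A] block_diag.carrier[OF B] .
  obtain E where E: "block_diag.orth_idems N c ?k E"
    and ideal: "E ` {..<?k} \<subseteq> block_diag.right_ideal N c B"
    using block_diag_orth_idems_exist[OF B] .
  obtain W where W: "W \<in> carrier_mat N ?k"
    and inj: "\<And>v. v \<in> carrier_vec ?k \<Longrightarrow> B * W *\<^sub>v v = 0\<^sub>v N \<Longrightarrow> v = 0\<^sub>v ?k"
    using block_diag.orth_idems_mult_inj[OF B E ideal] by blast
  have "v = 0\<^sub>v ?k" if v: "v \<in> carrier_vec ?k" and Av: "A * W *\<^sub>v v = 0\<^sub>v N" for v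
  proof -
    define u where "u = W *\<^sub>v v"
    have u: "u \<in> carrier_vec N" unfolding u_def using W v by simp
    have "A *\<^sub>v u = 0\<^sub>v N" unfolding u_def using Av A_carrier W v by simp
    then have "A * block_diag_of_vec N c u = 0\<^sub>m N N"
      using mult_block_diag_of_vec[OF A u] block_diag_of_vec_eq_zero_iff[of "0\<^sub>v N" N c] by simp
    then have "block_diag_of_vec N c (B *\<^sub>v u) = 0\<^sub>m N N"
      using ann[OF block_diag_of_vec_mem] mult_block_diag_of_vec[OF B u] by simp
    then have "B *\<^sub>v u = 0\<^sub>v N"
      using block_diag_of_vec_eq_zero_iff[OF mult_mat_vec_carrier[OF B_carrier u]] by simp
    then show ?thesis using inj[OF v] B_carrier W v unfolding u_def by simp
  qed
  then show ?thesis by (rule vec_space.rank_ge_if_mult_inj[OF A_carrier W])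
qed

section \<open>Signs of products of basis elements\<close>

definition inversions :: "'a::linorder set \<Rightarrow> 'a set \<Rightarrow> nat" where
  "inversions A B = card {(a, b). a \<in> A \<and> b \<in> B \<and> b < a}"

lemma cl_sign_eq_inversions: "cl_sign p A B = (-1) ^ inversions A B * (\<Prod>a\<in>A \<inter> B. cl_eta p a)"
  unfolding cl_sign_def inversions_def ..

lemma inversions_Un_left:
  assumes "finite X" "finite Y" "finite Z" "X \<inter> Y = {}"
  shows "inversions (X \<union> Y) Z = inversions X Z + inversions Y Z"
proof -
  have "{(a, b). a \<in> X \<union> Y \<and> b \<in> Z \<and> b < a}
      = {(a, b). a \<in> X \<and> b \<in> Z \<and> b < a} \<union> {(a, b). a \<in> Y \<and> b \<in> Z \<and> b < a}"
    by auto
  moreover have "finite {(a, b). a \<in> W \<and> b \<in> Z \<and> b < a}" if "finite W" for W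
    by (rule finite_subset[of _ "W \<times> Z"]) (use that assms(3) in auto)
  ultimately show ?thesis
    unfolding inversions_def using assms by (simp add: card_Un_disjoint disjoint_iff)
qed

lemma inversions_Un_right:
  assumes "finite X" "finite Y" "finite Z" "X \<inter> Y = {}"
  shows "inversions Z (X \<union> Y) = inversions Z X + inversions Z Y"
proof -
  have "{(a, b). a \<in> Z \<and> b \<in> X \<union> Y \<and> b < a}
      = {(a, b). a \<in> Z \<and> b \<in> X \<and> b < a} \<union> {(a, b). a \<in> Z \<and> b \<in> Y \<and> b < a}"
    by auto
  moreover have "finite {(a, b). a \<in> Z \<and> b \<in> W \<and> b < a}" if "finite W" for W
    by (rule finite_subset[of _ "Z \<times> W"]) (use that assms(3) in auto)
  ultimately show ?thesis
    unfolding inversions_def using assms by (simp add: card_Un_disjoint disjoint_iff)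
qed

lemma inversions_self:
  assumes A: "finite A"
  shows "inversions A A = card A * (card A - 1) div 2"
proof -
  define L where "L = {(a, b). a \<in> A \<and> b \<in> A \<and> b < a}"
  have L: "finite L" unfolding L_def by (rule finite_subset[of _ "A \<times> A"]) (use A in auto)
  have AA: "A \<times> A = (L \<union> prod.swap ` L) \<union> (\<lambda>a. (a, a)) ` A"
    unfolding L_def by (auto simp: image_iff)
  have "card (A \<times> A) = card (L \<union> prod.swap ` L) + card ((\<lambda>a. (a, a)) ` A)"
    unfolding AA by (rule card_Un_disjoint) (use A L in \<open>auto simp: L_def\<close>)
  then have "card A * card A = card (L \<union> prod.swap ` L) + card ((\<lambda>a. (a, a)) ` A)"
    by (simp add: card_cartesian_product)
  also have "card (L \<union> prod.swap ` L) = card L + card (prod.swap ` L)"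
    using L by (intro card_Un_disjoint) (auto simp: L_def)
  also have "card (prod.swap ` L) = card L" by (rule card_image) (auto simp: inj_on_def)
  finally have "card A * card A = 2 * card L + card A"
    by (simp add: card_image inj_on_def)
  then show ?thesis unfolding inversions_def L_def[symmetric]
    by (metis add_diff_cancel_right' diff_mult_distrib2 mult.commute mult_1_right
        nonzero_mult_div_cancel_left zero_neq_numeral)
qed

lemma neg_one_power_eq_if_even_add:
  assumes "even (m + n)"
  shows "(-1::'a::ring_1) ^ m = (-1) ^ n"
proof -
  have "(-1::'a) ^ n * (-1) ^ n = 1"
    by (simp add: power_add[symmetric])
  then have "(-1::'a) ^ m = (-1) ^ (m + n) * (-1) ^ n"
    by (simp add: power_add mult.assoc)
  then show ?thesis using assms by simp
qed

lemma neg_one_power_card_sym_diff: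
  assumes A: "finite A" and B: "finite B"
  shows "(-1::'a::ring_1) ^ card A * (-1) ^ card B = (-1) ^ card (sym_diff A B)"
proof -
  have "card (sym_diff A B) = card (A - B) + card (B - A)"
    by (rule card_Un_disjoint) (use A B in auto)
  moreover have "card A = card (A \<inter> B) + card (A - B)" "card B = card (A \<inter> B) + card (B - A)"
    using card_Int_Diff[OF A, of B] card_Int_Diff[OF B, of A] by (simp_all add: Int_commute)
  ultimately show ?thesis
    unfolding power_add[symmetric] by (intro neg_one_power_eq_if_even_add) presburger
qed

text \<open>Splitting A and B into A - B, B - A and their intersection, both sides count the same
  inversions modulo 2.\<close>
lemma neg_one_power_inversions_sym_diff:
  fixes A B :: "'b::linorder set"
  assumes A: "finite A" and B: "finite B"
  shows "(-1::'a::ring_1) ^ inversions B A * (-1) ^ inversions A A * (-1) ^ inversions B B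
       = (-1) ^ inversions (sym_diff A B) (sym_diff A B) * (-1) ^ inversions A B"
proof -
  define P Q C where "P = A - B" and "Q = B - A" and "C = A \<inter> B"
  have fin: "finite P" "finite Q" "finite C" unfolding P_def Q_def C_def using A B by auto
  have disj: "P \<inter> C = {}" "Q \<inter> C = {}" "P \<inter> Q = {}" "Q \<inter> P = {}"
    unfolding P_def Q_def C_def by auto
  have eq: "sym_diff A B = P \<union> Q" "A = P \<union> C" "B = Q \<union> C" unfolding P_def Q_def C_def by auto
  have inv: "inversions (X \<union> Y) (U \<union> V)
      = inversions X U + inversions X V + inversions Y U + inversions Y V"
    if "finite X" "finite Y" "finite U" "finite V" "X \<inter> Y = {}" "U \<inter> V = {}" for X Y U V :: "'b set"
    using that by (simp add: inversions_Un_left inversions_Un_right)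
  have "inversions A A = inversions P P + inversions P C + inversions C P + inversions C C"
    "inversions B B = inversions Q Q + inversions Q C + inversions C Q + inversions C C"
    "inversions A B = inversions P Q + inversions P C + inversions C Q + inversions C C"
    "inversions B A = inversions Q P + inversions Q C + inversions C P + inversions C C"
    "inversions (sym_diff A B) (sym_diff A B)
      = inversions P P + inversions P Q + inversions Q P + inversions Q Q"
    unfolding eq(1) unfolding eq(2,3) by (rule inv; use fin disj in simp)+
  then have "even ((inversions B A + inversions A A + inversions B B)
      + (inversions (sym_diff A B) (sym_diff A B) + inversions A B))"
    by presburger
  then show ?thesis unfolding power_add[symmetric] by (rule neg_one_power_eq_if_even_add)
qed

lemma prod_sym_diff_of_square_one:
  fixes g :: "'b \<Rightarrow> 'a::comm_monoid_mult"
  assumes A: "finite A" and B: "finite B" and g: "\<And>a. g a * g a = 1"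
  shows "prod g A * prod g B = prod g (sym_diff A B)"
proof -
  have "prod g A = prod g (A - B) * prod g (A \<inter> B)" "prod g B = prod g (B - A) * prod g (A \<inter> B)"
    using prod.Int_Diff[OF A, of g B] prod.Int_Diff[OF B, of g A] by (simp_all add: Int_commute mult.commute)
  moreover have "prod g (sym_diff A B) = prod g (A - B) * prod g (B - A)"
    by (rule prod.union_disjoint) (use A B in auto)
  moreover have "prod g (A \<inter> B) * prod g (A \<inter> B) = 1"
    by (simp add: g prod.distrib[symmetric])
  ultimately show ?thesis
    by (metis (no_types, lifting) mult.assoc mult.left_commute mult_1_right)
qed

lemma cl_eta_square: "cl_eta p a * cl_eta p a = 1"
  unfolding cl_eta_def by simp

lemma cl_sign_square: "cl_sign p A B * cl_sign p A B = 1"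
proof -
  have "(-1::complex) ^ inversions A B * (-1) ^ inversions A B = 1"
    by (simp add: power_add[symmetric])
  moreover have "(\<Prod>a\<in>A \<inter> B. cl_eta p a) * (\<Prod>a\<in>A \<inter> B. cl_eta p a) = 1"
    by (simp add: cl_eta_square prod.distrib[symmetric])
  ultimately show ?thesis unfolding cl_sign_eq_inversions
    by (metis (no_types, lifting) mult.assoc mult.left_commute mult_1_right)
qed

lemma cl_sign_Reals: "cl_sign p A B \<in> \<real>"
  unfolding cl_sign_def cl_eta_def by auto

lemma cl_sign_reverse:
  assumes A: "finite A" and B: "finite B"
  shows "cl_sign p B A * (-1) ^ (card A * (card A - 1) div 2) * (-1) ^ (card B * (card B - 1) div 2)
    = (-1) ^ (card (sym_diff A B) * (card (sym_diff A B) - 1) div 2) * cl_sign p A B"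
proof -
  have w: "(-1::complex) ^ (card X * (card X - 1) div 2) = (-1) ^ inversions X X" if "finite X" for X
    unfolding inversions_self[OF that] ..
  let ?e = "\<Prod>a\<in>A \<inter> B. cl_eta p a"
  have "cl_sign p B A * (-1) ^ (card A * (card A - 1) div 2) * (-1) ^ (card B * (card B - 1) div 2)
      = ((-1) ^ inversions B A * (-1) ^ inversions A A * (-1) ^ inversions B B) * ?e"
    unfolding cl_sign_eq_inversions w[OF A] w[OF B] Int_commute[of B A] by (simp only: mult_ac)
  also have "\<dots> = ((-1) ^ inversions (sym_diff A B) (sym_diff A B) * (-1) ^ inversions A B) * ?e"
    unfolding neg_one_power_inversions_sym_diff[OF A B] ..
  also have "\<dots> = (-1) ^ (card (sym_diff A B) * (card (sym_diff A B) - 1) div 2) * cl_sign p A B"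
    unfolding cl_sign_eq_inversions w[OF finite_UnI[OF finite_Diff[OF A] finite_Diff[OF B]]]
    by (simp only: mult_ac)
  finally show ?thesis .
qed

lemma cl_sign_adjoint:
  assumes A: "finite A" and B: "finite B"
  shows "cl_sign p B A * cl_sign p A A * cl_sign p B B
       = cl_sign p (sym_diff A B) (sym_diff A B) * cl_sign p A B"
proof -
  have "(\<Prod>a\<in>A. cl_eta p a) * (\<Prod>a\<in>B. cl_eta p a) = (\<Prod>a\<in>sym_diff A B. cl_eta p a)"
    by (rule prod_sym_diff_of_square_one[OF A B cl_eta_square])
  then show ?thesis
    unfolding cl_sign_eq_inversions Int_absorb
    using neg_one_power_inversions_sym_diff[OF A B, where 'a=complex]
    by (simp add: Int_commute algebra_simps)
qed

lemma cl_mult_mem [simp]: "cl_mult p q M N \<in> cl_elems p q"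
  unfolding cl_elems_def cl_mult_def by auto

lemma cl_elems_outside: "M \<in> cl_elems p q \<Longrightarrow> \<not> A \<subseteq> {..<p+q} \<Longrightarrow> M A = 0"
  unfolding cl_elems_def by auto

lemma cl_mult_altdef:
  "cl_mult p q M N C = (if C \<subseteq> {..<p+q} then
     (\<Sum>A\<in>Pow {..<p+q}. cl_sign p A (sym_diff A C) * M A * N (sym_diff A C)) else 0)"
proof -
  have "(\<Sum>B\<in>Pow {..<p+q}. if sym_diff A B = C then cl_sign p A B * M A * N B else 0)
      = cl_sign p A (sym_diff A C) * M A * N (sym_diff A C)"
    if "A \<subseteq> {..<p+q}" "C \<subseteq> {..<p+q}" for A
  proof -
    have "sym_diff A B = C \<longleftrightarrow> B = sym_diff A C" for B :: "nat set" by blast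
    then show ?thesis using that by (simp cong: if_cong) blast
  qed
  then show ?thesis unfolding cl_mult_def by simp
qed

section \<open>Coefficient twists\<close>

definition real_involution :: "(complex \<Rightarrow> complex) \<Rightarrow> bool" where
  "real_involution f \<longleftrightarrow> (\<forall>x y. f (x + y) = f x + f y \<and> f (x * y) = f x * f y \<and> f (f x) = x)
     \<and> (\<forall>x\<in>\<real>. f x = x)"

lemma real_involution_id: "real_involution (\<lambda>x. x)"
  unfolding real_involution_def by simp

lemma real_involution_cnj: "real_involution cnj"
  unfolding real_involution_def by (auto elim: Reals_cases)

lemma real_involutionD:
  assumes "real_involution f"
  shows "f (x + y) = f x + f y" "f (x * y) = f x * f y" "f (f x) = x" "x \<in> \<real> \<Longrightarrow> f x = x"
    and "f 0 = 0"
  using assms unfolding real_involution_def by auto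

text \<open>Grade involution, reversion, complex and Hermitian conjugation all rescale the coefficient
  m_A by a sign w A, possibly after conjugating it.\<close>
definition cl_twist :: "(nat set \<Rightarrow> complex) \<Rightarrow> (complex \<Rightarrow> complex) \<Rightarrow> cl \<Rightarrow> cl" where
  "cl_twist w f M = (\<lambda>A. w A * f (M A))"

lemma cl_twist_mem: "M \<in> cl_elems p q \<Longrightarrow> real_involution f \<Longrightarrow> cl_twist w f M \<in> cl_elems p q"
  unfolding cl_twist_def cl_elems_def by (auto simp: real_involutionD(5))

lemma cl_twist_zero: "real_involution f \<Longrightarrow> cl_twist w f (\<lambda>_. 0) = (\<lambda>_. 0)"
  unfolding cl_twist_def by (simp add: real_involutionD(5))

lemma cl_twist_twist:
  assumes f: "real_involution f" and w: "\<And>A. w A \<in> \<real>" "\<And>A. w A * w A = 1"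
  shows "cl_twist w f (cl_twist w f M) = M"
  unfolding cl_twist_def
  by (simp add: real_involutionD[OF f] w mult.assoc[symmetric])

lemma sum_real_involution:
  assumes "real_involution f"
  shows "f (sum g S) = (\<Sum>x\<in>S. f (g x))"
  by (induction S rule: infinite_finite_induct) (simp_all add: real_involutionD[OF assms])

lemma cl_twist_cl_mult_apply:
  assumes f: "real_involution f" and C: "C \<subseteq> {..<p+q}"
  shows "cl_twist w f (cl_mult p q M N) C = (\<Sum>A\<in>Pow {..<p+q}. \<Sum>B\<in>Pow {..<p+q}.
      if sym_diff A B = C then w C * f (cl_sign p A B * M A * N B) else 0)"
  using C unfolding cl_mult_def cl_twist_def
  by (simp add: sum_real_involution[OF f] sum_distrib_left real_involutionD(5)[OF f]
      if_distrib[of f] if_distrib[of "\<lambda>x. w C * x"] cong: if_cong)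

lemma cl_mult_twist:
  assumes f: "real_involution f"
    and w: "\<And>A B. A \<subseteq> {..<p+q} \<Longrightarrow> B \<subseteq> {..<p+q} \<Longrightarrow> w A * w B = w (sym_diff A B)"
  shows "cl_mult p q (cl_twist w f M) (cl_twist w f N) = cl_twist w f (cl_mult p q M N)"
proof
  fix C
  note fD = real_involutionD[OF f]
  show "cl_mult p q (cl_twist w f M) (cl_twist w f N) C = cl_twist w f (cl_mult p q M N) C"
  proof (cases "C \<subseteq> {..<p+q}")
    case True
    have "cl_sign p A B * cl_twist w f M A * cl_twist w f N B = w C * f (cl_sign p A B * M A * N B)"
      if "A \<subseteq> {..<p+q}" "B \<subseteq> {..<p+q}" "sym_diff A B = C" for A B
      unfolding cl_twist_def w[OF that(1,2), symmetric] that(3)[symmetric] using cl_sign_Reals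
      by (simp add: fD mult_ac)
    then show ?thesis
      unfolding cl_twist_cl_mult_apply[OF f True] using True unfolding cl_mult_def
      by (auto intro!: sum.cong)
  qed (simp add: cl_mult_def cl_twist_def fD)
qed

lemma cl_mult_twist_reverse:
  assumes f: "real_involution f"
    and w: "\<And>A B. A \<subseteq> {..<p+q} \<Longrightarrow> B \<subseteq> {..<p+q} \<Longrightarrow>
      cl_sign p B A * w A * w B = w (sym_diff A B) * cl_sign p A B"
  shows "cl_mult p q (cl_twist w f N) (cl_twist w f M) = cl_twist w f (cl_mult p q M N)"
proof
  fix C
  note fD = real_involutionD[OF f]
  show "cl_mult p q (cl_twist w f N) (cl_twist w f M) C = cl_twist w f (cl_mult p q M N) C"
  proof (cases "C \<subseteq> {..<p+q}")
    case True
    have "cl_sign p B A * cl_twist w f N B * cl_twist w f M A = w C * f (cl_sign p A B * M A * N B)"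
      if "A \<subseteq> {..<p+q}" "B \<subseteq> {..<p+q}" "sym_diff A B = C" for A B
    proof -
      have "cl_sign p B A * cl_twist w f N B * cl_twist w f M A
          = (cl_sign p B A * w A * w B) * f (M A) * f (N B)"
        unfolding cl_twist_def by (simp add: mult_ac)
      then show ?thesis
        unfolding w[OF that(1,2)] that(3) using cl_sign_Reals by (simp add: fD mult_ac)
    qed
    moreover have "sym_diff B A = sym_diff A B" for A B :: "nat set" by blast
    ultimately show ?thesis
      unfolding cl_twist_cl_mult_apply[OF f True] using True unfolding cl_mult_def
      by (subst sum.swap) (auto intro!: sum.cong)
  qed (simp add: cl_mult_def cl_twist_def fD)
qed

lemma cl_grade_sum_eq_twist:
  assumes M: "M \<in> cl_elems p q"
  shows "(\<lambda>B. \<Sum>k\<le>p+q. cl_scale (g k) (cl_grade k M) B) = cl_twist (\<lambda>A. g (card A)) (\<lambda>x. x) M"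
proof
  fix B
  show "(\<Sum>k\<le>p+q. cl_scale (g k) (cl_grade k M) B) = cl_twist (\<lambda>A. g (card A)) (\<lambda>x. x) M B"
  proof (cases "B \<subseteq> {..<p+q}")
    case True
    then have "card B \<le> p + q" using card_mono[of "{..<p+q}" B] by simp
    then show ?thesis unfolding cl_scale_def cl_grade_def cl_twist_def
      by (simp add: if_distrib[of "\<lambda>x. g _ * x"] cong: if_cong)
  qed (simp add: cl_scale_def cl_grade_def cl_twist_def cl_elems_outside[OF M])
qed

lemma cl_hat_eq_twist:
  "M \<in> cl_elems p q \<Longrightarrow> cl_hat p q M = cl_twist (\<lambda>A. (-1) ^ card A) (\<lambda>x. x) M"
  unfolding cl_hat_def by (rule cl_grade_sum_eq_twist)

lemma cl_rev_eq_twist: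
  "M \<in> cl_elems p q \<Longrightarrow> cl_rev p q M = cl_twist (\<lambda>A. (-1) ^ (card A * (card A - 1) div 2)) (\<lambda>x. x) M"
  unfolding cl_rev_def by (rule cl_grade_sum_eq_twist)

lemma cl_conj_eq_twist: "cl_conj M = cl_twist (\<lambda>_. 1) cnj M"
  unfolding cl_conj_def cl_twist_def by simp

abbreviation cl_adjoint :: "nat \<Rightarrow> cl \<Rightarrow> cl" where
  "cl_adjoint p \<equiv> cl_twist (\<lambda>A. cl_sign p A A) cnj"

lemma cl_adjoint_mult: "cl_adjoint p (cl_mult p q M M') = cl_mult p q (cl_adjoint p M') (cl_adjoint p M)"
  by (rule cl_mult_twist_reverse[OF real_involution_cnj, symmetric])
    (auto intro: cl_sign_adjoint finite_subset)

lemma cl_adjoint_adjoint: "cl_adjoint p (cl_adjoint p M) = M"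
  by (rule cl_twist_twist[OF real_involution_cnj]) (simp_all add: cl_sign_Reals cl_sign_square)

lemma cl_adjoint_mult_self_eq_zero:
  assumes M: "M \<in> cl_elems p q" and zero: "cl_mult p q (cl_adjoint p M) M = (\<lambda>_. 0)"
  shows "M = (\<lambda>_. 0)"
proof -
  have sq: "cl_sign p A A * (cl_sign p A A * cnj (M A)) * M A = of_real ((cmod (M A))\<^sup>2)" for A
  proof -
    have "cl_sign p A A * (cl_sign p A A * cnj (M A)) * M A
        = (cl_sign p A A * cl_sign p A A) * (M A * cnj (M A))"
      by (simp only: mult_ac)
    then show ?thesis by (simp only: cl_sign_square mult_1_left complex_norm_square)
  qed
  have "0 = cl_mult p q (cl_adjoint p M) M {}" using zero by simp
  also have "\<dots> = (\<Sum>A\<in>Pow {..<p+q}. of_real ((cmod (M A))\<^sup>2))"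
    unfolding cl_mult_altdef[of p q _ M] cl_twist_def by (simp add: sq)
  finally have "(\<Sum>A\<in>Pow {..<p+q}. (cmod (M A))\<^sup>2) = 0"
    by (metis of_real_eq_0_iff of_real_sum)
  then have "\<forall>A\<in>Pow {..<p+q}. (cmod (M A))\<^sup>2 = 0"
    using sum_nonneg_eq_0_iff[of "Pow {..<p+q}" "\<lambda>A. (cmod (M A))\<^sup>2"] by simp
  then show ?thesis using cl_elems_outside[OF M] by (metis Pow_iff norm_eq_zero zero_eq_power2)
qed

lemma cl_mult_basis_left:
  assumes A: "A \<subseteq> {..<p+q}"
  shows "cl_mult p q (cl_basis A) N C
    = (if C \<subseteq> {..<p+q} then cl_sign p A (sym_diff A C) * N (sym_diff A C) else 0)"
  using A unfolding cl_mult_altdef[of p q _ N C] cl_basis_def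
  by (simp add: if_distrib[of "\<lambda>x. _ * x * _"] cong: if_cong)

lemma cl_mult_scale_left: "cl_mult p q (cl_scale s M) N = cl_scale s (cl_mult p q M N)"
  unfolding cl_mult_def cl_scale_def
  by (simp add: sum_distrib_left if_distrib[of "\<lambda>x. s * x"] mult_ac cong: if_cong)

lemma cl_basis_mult_inverse:
  assumes A: "A \<subseteq> {..<p+q}"
  shows "cl_mult p q (cl_basis A) (cl_scale (cl_sign p A A) (cl_basis A)) = cl_one"
    and "cl_mult p q (cl_scale (cl_sign p A A) (cl_basis A)) (cl_basis A) = cl_one"
proof -
  have sd: "sym_diff A C = A \<longleftrightarrow> C = {}" for C by blast
  show "cl_mult p q (cl_basis A) (cl_scale (cl_sign p A A) (cl_basis A)) = cl_one"
  proof
    fix C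
    show "cl_mult p q (cl_basis A) (cl_scale (cl_sign p A A) (cl_basis A)) C = cl_one C"
      unfolding cl_mult_basis_left[OF A] using cl_sign_square[of p A A]
      by (auto simp: cl_one_def cl_basis_def cl_scale_def sd)
  qed
  show "cl_mult p q (cl_scale (cl_sign p A A) (cl_basis A)) (cl_basis A) = cl_one"
  proof
    fix C
    show "cl_mult p q (cl_scale (cl_sign p A A) (cl_basis A)) (cl_basis A) C = cl_one C"
      unfolding cl_mult_scale_left unfolding cl_scale_def cl_mult_basis_left[OF A]
      using cl_sign_square[of p A A] by (auto simp: cl_one_def cl_basis_def sd)
  qed
qed

section \<open>Transport through the representation\<close>

lemma block_diag_mats_full: "block_diag_mats N N = carrier_mat N N"
  unfolding block_diag_mats_def by auto

lemma four_block_diag_eq_block_diag_mats: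
  "{four_block_mat X (0\<^sub>m h h) (0\<^sub>m h h) Y | X Y. X \<in> carrier_mat h h \<and> Y \<in> carrier_mat h h}
    = block_diag_mats (h + h) h"
proof (intro equalityI subsetI)
  fix Z :: "'a mat"
  assume "Z \<in> {four_block_mat X (0\<^sub>m h h) (0\<^sub>m h h) Y | X Y. X \<in> carrier_mat h h \<and> Y \<in> carrier_mat h h}"
  then obtain X Y where "X \<in> carrier_mat h h" "Y \<in> carrier_mat h h"
    and "Z = four_block_mat X (0\<^sub>m h h) (0\<^sub>m h h) Y" by blast
  then show "Z \<in> block_diag_mats (h + h) h" by (intro block_diag_matsI) auto
next
  fix Z :: "'a mat" assume Z: "Z \<in> block_diag_mats (h + h) h"
  define X where "X = mat h h (\<lambda>(i, j). Z $$ (i, j))"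
  define Y where "Y = mat h h (\<lambda>(i, j). Z $$ (i + h, j + h))"
  have "Z = four_block_mat X (0\<^sub>m h h) (0\<^sub>m h h) Y"
    using Z block_diag_mats_off[OF Z] unfolding X_def Y_def block_diag_mats_def
    by (intro eq_matI) auto
  moreover have "X \<in> carrier_mat h h" "Y \<in> carrier_mat h h" unfolding X_def Y_def by auto
  ultimately show "Z \<in> {four_block_mat X (0\<^sub>m h h) (0\<^sub>m h h) Y | X Y. X \<in> carrier_mat h h \<and> Y \<in> carrier_mat h h}"
    by blast
qed

lemma cl_target_eq_block_diag_mats:
  "cl_target n = block_diag_mats (2 ^ ((n + 1) div 2))
     (if even n then 2 ^ ((n + 1) div 2) else 2 ^ ((n + 1) div 2) div 2)"
proof (cases "even n")
  case False
  then obtain m where "n = 2 * m + 1" by (auto elim: oddE)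
  then show ?thesis
    using four_block_diag_eq_block_diag_mats[of "2 ^ m", where 'a=complex]
    unfolding cl_target_def Let_def by (simp add: mult_2)
qed (simp add: cl_target_def Let_def block_diag_mats_full)

locale clifford_rep =
  fixes p q :: nat and \<beta> :: "cl \<Rightarrow> complex mat"
  assumes iso: "cl_iso p q \<beta>"
begin

definition N :: nat where "N = 2 ^ ((p + q + 1) div 2)"

definition c :: nat where "c = (if even (p + q) then N else N div 2)"

abbreviation T :: "complex mat set" where "T \<equiv> block_diag_mats N c"

definition \<gamma> :: "complex mat \<Rightarrow> cl" where "\<gamma> = inv_into (cl_elems p q) \<beta>"

lemma beta_bij: "bij_betw \<beta> (cl_elems p q) T"
  using iso cl_target_eq_block_diag_mats[of "p + q"] unfolding cl_iso_def N_def c_def by simp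

lemma beta_mem: "M \<in> cl_elems p q \<Longrightarrow> \<beta> M \<in> T"
  using beta_bij bij_betwE by blast

lemma beta_mult: "M \<in> cl_elems p q \<Longrightarrow> M' \<in> cl_elems p q \<Longrightarrow> \<beta> (cl_mult p q M M') = \<beta> M * \<beta> M'"
  using iso unfolding cl_iso_def by blast

lemma beta_one: "\<beta> cl_one = 1\<^sub>m N"
  using iso unfolding cl_iso_def N_def by blast

lemma zero_mem_cl_elems: "(\<lambda>_. 0) \<in> cl_elems p q"
  unfolding cl_elems_def by simp

lemma beta_zero: "\<beta> (\<lambda>_. 0) = 0\<^sub>m N N"
proof -
  have "\<beta> (cl_scale 0 (\<lambda>_. 0)) = 0 \<cdot>\<^sub>m \<beta> (\<lambda>_. 0)"
    using iso zero_mem_cl_elems unfolding cl_iso_def by blast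
  moreover have "0 \<cdot>\<^sub>m \<beta> (\<lambda>_. 0) = 0\<^sub>m N N"
    using block_diag.carrier[OF beta_mem[OF zero_mem_cl_elems]] by (intro eq_matI) auto
  ultimately show ?thesis by (simp add: cl_scale_def)
qed

lemma beta_eq_zero_iff: "M \<in> cl_elems p q \<Longrightarrow> \<beta> M = 0\<^sub>m N N \<longleftrightarrow> M = (\<lambda>_. 0)"
  using beta_bij zero_mem_cl_elems beta_zero unfolding bij_betw_def inj_on_def by metis

lemma gamma_mem: "X \<in> T \<Longrightarrow> \<gamma> X \<in> cl_elems p q"
  and beta_gamma: "X \<in> T \<Longrightarrow> \<beta> (\<gamma> X) = X"
  and gamma_beta: "M \<in> cl_elems p q \<Longrightarrow> \<gamma> (\<beta> M) = M"
  unfolding \<gamma>_def using beta_bij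
  by (auto simp: bij_betw_inv_into_left bij_betw_inv_into_right inv_into_into bij_betw_def)

lemma gamma_mult: "X \<in> T \<Longrightarrow> Y \<in> T \<Longrightarrow> \<gamma> (X * Y) = cl_mult p q (\<gamma> X) (\<gamma> Y)"
  using beta_mult[OF gamma_mem gamma_mem] beta_gamma gamma_beta[OF cl_mult_mem] by metis

lemma cmat_rank_eq: "X \<in> T \<Longrightarrow> cmat_rank X = vec_space.rank N X"
  unfolding cmat_rank_def by simp

lemma rank_eq_of_involution:
  assumes closed: "\<And>M. M \<in> cl_elems p q \<Longrightarrow> \<phi> M \<in> cl_elems p q"
    and zero: "\<phi> (\<lambda>_. 0) = (\<lambda>_. 0)"
    and invol: "\<And>M. M \<in> cl_elems p q \<Longrightarrow> \<phi> (\<phi> M) = M"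
    and mult: "(\<forall>M\<in>cl_elems p q. \<forall>M'\<in>cl_elems p q. \<phi> (cl_mult p q M M') = cl_mult p q (\<phi> M) (\<phi> M')) \<or>
      (\<forall>M\<in>cl_elems p q. \<forall>M'\<in>cl_elems p q. \<phi> (cl_mult p q M M') = cl_mult p q (\<phi> M') (\<phi> M))"
    and M: "M \<in> cl_elems p q"
  shows "cmat_rank (\<beta> (\<phi> M)) = cmat_rank (\<beta> M)"
proof -
  define \<psi> where "\<psi> X = \<beta> (\<phi> (\<gamma> X))" for X
  have \<psi>_mem: "\<psi> X \<in> T" if "X \<in> T" for X
    unfolding \<psi>_def using beta_mem closed gamma_mem that by blast
  have \<psi>_zero: "\<psi> (0\<^sub>m N N) = 0\<^sub>m N N"
    unfolding \<psi>_def using gamma_beta[OF zero_mem_cl_elems] beta_zero zero by metis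
  have \<psi>_zero_iff: "X = 0\<^sub>m N N" if "X \<in> T" "\<psi> X = 0\<^sub>m N N" for X
  proof -
    have "\<phi> (\<gamma> X) = (\<lambda>_. 0)" using that beta_eq_zero_iff closed gamma_mem unfolding \<psi>_def by blast
    then have "\<gamma> X = (\<lambda>_. 0)" using invol[OF gamma_mem[OF that(1)]] zero by metis
    then show ?thesis using beta_gamma[OF that(1)] beta_zero by metis
  qed
  have \<psi>_mult: "(\<forall>X\<in>T. \<forall>Y\<in>T. \<psi> (X * Y) = \<psi> X * \<psi> Y) \<or> (\<forall>X\<in>T. \<forall>Y\<in>T. \<psi> (X * Y) = \<psi> Y * \<psi> X)"
    using mult unfolding \<psi>_def by (auto simp: gamma_mult gamma_mem closed beta_mult)
  have le: "vec_space.rank N (\<beta> M) \<le> vec_space.rank N (\<beta> (\<phi> M))" if M: "M \<in> cl_elems p q" for M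
    using block_diag_rank_le_image[OF \<psi>_mem \<psi>_zero \<psi>_zero_iff \<psi>_mult beta_mem[OF M]]
    unfolding \<psi>_def gamma_beta[OF M] .
  show ?thesis
    using le[OF M] le[OF closed[OF M]] invol[OF M] cmat_rank_eq beta_mem closed M by simp
qed

lemma rank_cl_twist:
  assumes f: "real_involution f" and w: "\<And>A. w A \<in> \<real>" "\<And>A. w A * w A = 1"
    and mult: "(\<forall>A B. A \<subseteq> {..<p+q} \<longrightarrow> B \<subseteq> {..<p+q} \<longrightarrow> w A * w B = w (sym_diff A B)) \<or>
      (\<forall>A B. A \<subseteq> {..<p+q} \<longrightarrow> B \<subseteq> {..<p+q} \<longrightarrow>
        cl_sign p B A * w A * w B = w (sym_diff A B) * cl_sign p A B)"
    and M: "M \<in> cl_elems p q"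
  shows "cmat_rank (\<beta> (cl_twist w f M)) = cmat_rank (\<beta> M)"
proof (rule rank_eq_of_involution)
  from mult show "(\<forall>M\<in>cl_elems p q. \<forall>M'\<in>cl_elems p q.
          cl_twist w f (cl_mult p q M M') = cl_mult p q (cl_twist w f M) (cl_twist w f M')) \<or>
        (\<forall>M\<in>cl_elems p q. \<forall>M'\<in>cl_elems p q.
          cl_twist w f (cl_mult p q M M') = cl_mult p q (cl_twist w f M') (cl_twist w f M))"
  proof (elim disjE)
    assume "\<forall>A B. A \<subseteq> {..<p+q} \<longrightarrow> B \<subseteq> {..<p+q} \<longrightarrow> w A * w B = w (sym_diff A B)"
    then show ?thesis by (intro disjI1 ballI) (simp add: cl_mult_twist[OF f])
  next
    assume "\<forall>A B. A \<subseteq> {..<p+q} \<longrightarrow> B \<subseteq> {..<p+q} \<longrightarrow>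
      cl_sign p B A * w A * w B = w (sym_diff A B) * cl_sign p A B"
    then show ?thesis by (intro disjI2 ballI) (simp add: cl_mult_twist_reverse[OF f])
  qed
qed (use f w M in \<open>simp_all add: cl_twist_mem cl_twist_zero cl_twist_twist\<close>)

lemma rank_cl_hat:
  assumes M: "M \<in> cl_elems p q"
  shows "cmat_rank (\<beta> (cl_hat p q M)) = cmat_rank (\<beta> M)"
proof -
  have "\<forall>A B. A \<subseteq> {..<p+q} \<longrightarrow> B \<subseteq> {..<p+q} \<longrightarrow>
      (-1::complex) ^ card A * (-1) ^ card B = (-1) ^ card (sym_diff A B)"
    by (auto intro: neg_one_power_card_sym_diff finite_subset)
  then show ?thesis unfolding cl_hat_eq_twist[OF M]
    by (intro rank_cl_twist[OF real_involution_id] disjI1 M) (simp_all flip: power_add)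
qed

lemma rank_cl_rev:
  assumes M: "M \<in> cl_elems p q"
  shows "cmat_rank (\<beta> (cl_rev p q M)) = cmat_rank (\<beta> M)"
proof -
  have "\<forall>A B. A \<subseteq> {..<p+q} \<longrightarrow> B \<subseteq> {..<p+q} \<longrightarrow>
      cl_sign p B A * (-1) ^ (card A * (card A - 1) div 2) * (-1) ^ (card B * (card B - 1) div 2)
      = (-1) ^ (card (sym_diff A B) * (card (sym_diff A B) - 1) div 2) * cl_sign p A B"
    by (intro allI impI cl_sign_reverse) (auto intro: finite_subset)
  then show ?thesis unfolding cl_rev_eq_twist[OF M]
    by (intro rank_cl_twist[OF real_involution_id] disjI2 M) (simp_all flip: power_add)
qed

lemma rank_cl_conj:
  assumes M: "M \<in> cl_elems p q"
  shows "cmat_rank (\<beta> (cl_conj M)) = cmat_rank (\<beta> M)"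
  unfolding cl_conj_eq_twist by (intro rank_cl_twist[OF real_involution_cnj] disjI1 M) auto

lemma rank_cl_adjoint:
  assumes M: "M \<in> cl_elems p q"
  shows "cmat_rank (\<beta> (cl_adjoint p M)) = cmat_rank (\<beta> M)"
proof -
  have "\<forall>A B. A \<subseteq> {..<p+q} \<longrightarrow> B \<subseteq> {..<p+q} \<longrightarrow>
      cl_sign p B A * cl_sign p A A * cl_sign p B B = cl_sign p (sym_diff A B) (sym_diff A B) * cl_sign p A B"
    by (auto intro: cl_sign_adjoint finite_subset)
  then show ?thesis
    by (intro rank_cl_twist[OF real_involution_cnj] disjI2 M) (simp_all add: cl_sign_Reals cl_sign_square)
qed

lemma cl_inverse_unique:
  assumes X: "X \<in> cl_elems p q" and Y: "Y \<in> cl_elems p q" and Y': "Y' \<in> cl_elems p q"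
    and left: "cl_mult p q Y X = cl_one" and right: "cl_mult p q X Y' = cl_one"
  shows "Y = Y'"
proof -
  have XY': "\<beta> X * \<beta> Y' = 1\<^sub>m N" using right beta_mult[OF X Y'] beta_one by simp
  have YX: "\<beta> Y * \<beta> X = 1\<^sub>m N" using left beta_mult[OF Y X] beta_one by simp
  have "\<beta> Y = \<beta> Y * (\<beta> X * \<beta> Y')"
    using XY' block_diag.carrier[OF beta_mem[OF Y]] by simp
  also have "\<dots> = \<beta> Y * \<beta> X * \<beta> Y'"
    using block_diag.mult_assoc[OF beta_mem[OF Y] beta_mem[OF X] beta_mem[OF Y']] by simp
  also have "\<dots> = \<beta> Y'"
    using YX block_diag.carrier[OF beta_mem[OF Y']] by simp
  finally show ?thesis using beta_bij Y Y' unfolding bij_betw_def inj_on_def by blast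
qed

lemma cl_inv_basis:
  assumes A: "A \<subseteq> {..<p+q}"
  shows "cl_inv p q (cl_basis A) = cl_scale (cl_sign p A A) (cl_basis A)"
proof -
  have mem: "cl_scale s (cl_basis A) \<in> cl_elems p q" for s
    using A unfolding cl_elems_def cl_scale_def cl_basis_def by auto
  show ?thesis
    unfolding cl_inv_def
    using cl_basis_mult_inverse[OF A] cl_inverse_unique[OF mem[of 1]] mem
    by (intro the_equality) (auto simp: cl_scale_def)
qed

lemma cl_dagger_eq_adjoint:
  assumes M: "M \<in> cl_elems p q"
  shows "cl_dagger p q M = cl_adjoint p M"
proof
  fix B
  have "cl_dagger p q M B = (\<Sum>A\<in>Pow {..<p+q}. if A = B then cnj (M A) * cl_sign p A A else 0)"
    unfolding cl_dagger_def using cl_inv_basis by (intro sum.cong) (auto simp: cl_scale_def cl_basis_def)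
  also have "\<dots> = cl_adjoint p M B"
    using cl_elems_outside[OF M, of B] by (auto simp: cl_twist_def mult.commute)
  finally show "cl_dagger p q M B = cl_adjoint p M B" .
qed

lemma rank_cl_adjoint_mult_self:
  assumes M: "M \<in> cl_elems p q"
  shows "cmat_rank (\<beta> (cl_mult p q (cl_adjoint p M) M)) = cmat_rank (\<beta> M)"
proof -
  have adj: "cl_adjoint p X \<in> cl_elems p q" if "X \<in> cl_elems p q" for X
    using cl_twist_mem[OF that real_involution_cnj] .
  let ?D = "\<beta> (cl_adjoint p M)" and ?B = "\<beta> M"
  have D: "?D \<in> T" and B: "?B \<in> T" using beta_mem adj M by blast+
  have DB: "\<beta> (cl_mult p q (cl_adjoint p M) M) = ?D * ?B" using beta_mult[OF adj[OF M] M] .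
  have "vec_space.rank N (?D * ?B) \<le> vec_space.rank N ?D"
    using vec_space.rank_mult_right_le block_diag.carrier[OF D] block_diag.carrier[OF B] by blast
  moreover have "vec_space.rank N ?B \<le> vec_space.rank N (?D * ?B)"
  proof (rule block_diag_rank_le_of_annihilator[OF _ B])
    show "?D * ?B \<in> T" using D B by simp
    fix Z assume Z: "Z \<in> T" and DBZ: "?D * ?B * Z = 0\<^sub>m N N"
    define Y where "Y = cl_mult p q M (\<gamma> Z)"
    have BZ: "\<beta> Y = ?B * Z" unfolding Y_def using beta_mult[OF M gamma_mem[OF Z]] beta_gamma[OF Z] by simp
    have "\<beta> (cl_mult p q (cl_adjoint p Y) Y) = \<beta> (cl_adjoint p (\<gamma> Z)) * ?D * (?B * Z)"
      unfolding Y_def cl_adjoint_mult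
      using beta_mult adj M gamma_mem[OF Z] BZ[unfolded Y_def] by simp
    also have "\<dots> = \<beta> (cl_adjoint p (\<gamma> Z)) * (?D * ?B * Z)"
      using beta_mem[OF adj[OF gamma_mem[OF Z]]] D B Z by simp
    also have "\<dots> = 0\<^sub>m N N" using DBZ beta_mem[OF adj[OF gamma_mem[OF Z]]] by simp
    finally have "cl_mult p q (cl_adjoint p Y) Y = (\<lambda>_. 0)" using beta_eq_zero_iff by simp
    then have "Y = (\<lambda>_. 0)" using cl_adjoint_mult_self_eq_zero[of Y p q] unfolding Y_def by simp
    then show "?B * Z = 0\<^sub>m N N" using BZ beta_zero by simp
  qed
  ultimately show ?thesis
    using rank_cl_adjoint[OF M] DB cmat_rank_eq D B by simp
qed

end

theorem theorem3:
  fixes p q :: nat and M :: cl and \<beta> :: "cl \<Rightarrow> complex mat"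
  assumes "p + q \<ge> 1"
    and "cl_iso p q \<beta>"
    and "M \<in> cl_elems p q"
  shows "cmat_rank (\<beta> M) = cmat_rank (\<beta> (cl_hat p q M))
       \<and> cmat_rank (\<beta> M) = cmat_rank (\<beta> (cl_rev p q M))
       \<and> cmat_rank (\<beta> M) = cmat_rank (\<beta> (cl_conj M))
       \<and> cmat_rank (\<beta> M) = cmat_rank (\<beta> (cl_dagger p q M))
       \<and> cmat_rank (\<beta> M) = cmat_rank (\<beta> (cl_mult p q (cl_dagger p q M) M))
       \<and> cmat_rank (\<beta> M) = cmat_rank (\<beta> (cl_mult p q M (cl_dagger p q M)))"
proof -
  interpret clifford_rep p q \<beta> by unfold_locales (rule assms(2))
  have M: "M \<in> cl_elems p q" by (rule assms(3))
  have M_adj: "cl_adjoint p M \<in> cl_elems p q" by (rule cl_twist_mem[OF M real_involution_cnj])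
  have "cl_mult p q M (cl_adjoint p M) = cl_mult p q (cl_adjoint p (cl_adjoint p M)) (cl_adjoint p M)"
    by (simp add: cl_adjoint_adjoint)
  then show ?thesis
    unfolding cl_dagger_eq_adjoint[OF M]
    using rank_cl_hat[OF M] rank_cl_rev[OF M] rank_cl_conj[OF M] rank_cl_adjoint[OF M]
      rank_cl_adjoint_mult_self[OF M] rank_cl_adjoint_mult_self[OF M_adj]
    by simp
qed

end
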